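(* Let $B$ be a left-free $H$-$G$-biset with a finite basis $S$, and let $g\in G$. Choose a basis $S$ and write $\Phi(g)=\langle h_s\rangle_{s\in S}\pi$ for the associated wreath map; let $S_1,\dots,S_\ell$ be the orbits of $\pi$ on $S$, and for each $j$, writing $S_j=\{s_1,\dots,s_{d_j}\}$ with $s_i^\pi=s_{i+1}$ (indices modulo $d_j$), let $k_j=h_{s_1}h_{s_2}\cdots h_{s_{d_j}}$. Then the multiset $\{(d_j,k_j^H)\mid j=1,\dots,\ell\}$ of pairs (degree, $H$-conjugacy class), called the lift of $g^G$, is independent of the choice of $g$ in its conjugacy class $g^G$, of the basis $S$, and of the cyclic ordering chosen for each orbit $S_j$.
   Context: An $H$-$G$-biset $B$ is left-free if as a left $H$-set it is isomorphic to $H\times S$; a basis is a subset $S$ containing exactly one element from each left $H$-orbit. The wreath map $\Phi\colon G\to H\wr\mathrm{Sym}(S)$ is defined by $\Phi(g)=\langle h_s\rangle_{s\in S}\pi$ where $sg=h_s\,s^\pi$ for all $s\in S$ (with $h_s\in H$, $s^\pi\in S$). $k^H$ denotes the conjugacy class of $k$ in $H$. *)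

theory Defs
  imports "HOL-Algebra.Group" "HOL-Library.Multiset"
begin

definition biset ::
  "('h, 'a) monoid_scheme \<Rightarrow> ('g, 'c) monoid_scheme \<Rightarrow> 'b set
   \<Rightarrow> ('h \<Rightarrow> 'b \<Rightarrow> 'b) \<Rightarrow> ('b \<Rightarrow> 'g \<Rightarrow> 'b) \<Rightarrow> bool" where
  "biset H G X l r \<longleftrightarrow> group H \<and> group G \<and>
     (\<forall>h\<in>carrier H. \<forall>b\<in>X. l h b \<in> X) \<and>
     (\<forall>b\<in>X. l \<one>\<^bsub>H\<^esub> b = b) \<and>
     (\<forall>h1\<in>carrier H. \<forall>h2\<in>carrier H. \<forall>b\<in>X. l (h1 \<otimes>\<^bsub>H\<^esub> h2) b = l h1 (l h2 b)) \<and>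
     (\<forall>g\<in>carrier G. \<forall>b\<in>X. r b g \<in> X) \<and>
     (\<forall>b\<in>X. r b \<one>\<^bsub>G\<^esub> = b) \<and>
     (\<forall>g1\<in>carrier G. \<forall>g2\<in>carrier G. \<forall>b\<in>X. r b (g1 \<otimes>\<^bsub>G\<^esub> g2) = r (r b g1) g2) \<and>
     (\<forall>h\<in>carrier H. \<forall>g\<in>carrier G. \<forall>b\<in>X. l h (r b g) = r (l h b) g)"

definition left_free ::
  "('h, 'a) monoid_scheme \<Rightarrow> 'b set \<Rightarrow> ('h \<Rightarrow> 'b \<Rightarrow> 'b) \<Rightarrow> bool" where
  "left_free H X l \<longleftrightarrow>
     (\<exists>S. S \<subseteq> X \<and> bij_betw (\<lambda>(h, s). l h s) (carrier H \<times> S) X)"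

definition left_orbit ::
  "('h, 'a) monoid_scheme \<Rightarrow> ('h \<Rightarrow> 'b \<Rightarrow> 'b) \<Rightarrow> 'b \<Rightarrow> 'b set" where
  "left_orbit H l b = {l h b | h. h \<in> carrier H}"

definition is_basis ::
  "('h, 'a) monoid_scheme \<Rightarrow> 'b set \<Rightarrow> ('h \<Rightarrow> 'b \<Rightarrow> 'b) \<Rightarrow> 'b set \<Rightarrow> bool" where
  "is_basis H X l S \<longleftrightarrow> S \<subseteq> X \<and>
     (\<forall>b\<in>X. \<exists>!s. s \<in> S \<and> s \<in> left_orbit H l b)"

text \<open>Wreath map \<Phi>(g) = \<langle>h_s\<rangle> \<pi>, where s g = h_s s^\<pi>.\<close>
definition wperm ::
  "('h, 'a) monoid_scheme \<Rightarrow> ('h \<Rightarrow> 'b \<Rightarrow> 'b) \<Rightarrow> ('b \<Rightarrow> 'g \<Rightarrow> 'b)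
   \<Rightarrow> 'b set \<Rightarrow> 'g \<Rightarrow> 'b \<Rightarrow> 'b" where
  "wperm H l r S g s = (THE t. t \<in> S \<and> (\<exists>h\<in>carrier H. r s g = l h t))"

definition wcoef ::
  "('h, 'a) monoid_scheme \<Rightarrow> ('h \<Rightarrow> 'b \<Rightarrow> 'b) \<Rightarrow> ('b \<Rightarrow> 'g \<Rightarrow> 'b)
   \<Rightarrow> 'b set \<Rightarrow> 'g \<Rightarrow> 'b \<Rightarrow> 'h" where
  "wcoef H l r S g s = (THE h. h \<in> carrier H \<and> r s g = l h (wperm H l r S g s))"

definition perm_orbit :: "('b \<Rightarrow> 'b) \<Rightarrow> 'b \<Rightarrow> 'b set" where
  "perm_orbit p s = {(p ^^ n) s | n. True}"

definition wreath_orbits ::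
  "('h, 'a) monoid_scheme \<Rightarrow> ('h \<Rightarrow> 'b \<Rightarrow> 'b) \<Rightarrow> ('b \<Rightarrow> 'g \<Rightarrow> 'b)
   \<Rightarrow> 'b set \<Rightarrow> 'g \<Rightarrow> 'b set set" where
  "wreath_orbits H l r S g = perm_orbit (wperm H l r S g) ` S"

fun cycle_prod ::
  "('h, 'a) monoid_scheme \<Rightarrow> ('h \<Rightarrow> 'b \<Rightarrow> 'b) \<Rightarrow> ('b \<Rightarrow> 'g \<Rightarrow> 'b)
   \<Rightarrow> 'b set \<Rightarrow> 'g \<Rightarrow> 'b \<Rightarrow> nat \<Rightarrow> 'h" where
  "cycle_prod H l r S g s 0 = \<one>\<^bsub>H\<^esub>"
| "cycle_prod H l r S g s (Suc n) =
     wcoef H l r S g s \<otimes>\<^bsub>H\<^esub> cycle_prod H l r S g (wperm H l r S g s) n"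

definition conj_class :: "('h, 'a) monoid_scheme \<Rightarrow> 'h \<Rightarrow> 'h set" where
  "conj_class H k = {x \<otimes>\<^bsub>H\<^esub> k \<otimes>\<^bsub>H\<^esub> inv\<^bsub>H\<^esub> x | x. x \<in> carrier H}"

text \<open>The lift of g^G, computed from basis S, element g and a choice rep Q \<in> Q
of starting point s_1 in each orbit O of \<pi> (which fixes the cyclic ordering).\<close>
definition lift ::
  "('h, 'a) monoid_scheme \<Rightarrow> ('h \<Rightarrow> 'b \<Rightarrow> 'b) \<Rightarrow> ('b \<Rightarrow> 'g \<Rightarrow> 'b)
   \<Rightarrow> 'b set \<Rightarrow> 'g \<Rightarrow> ('b set \<Rightarrow> 'b) \<Rightarrow> (nat \<times> 'h set) multiset" where
  "lift H l r S g rep =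
     image_mset (\<lambda>Q. (card Q, conj_class H (cycle_prod H l r S g (rep Q) (card Q))))
       (mset_set (wreath_orbits H l r S g))"

end

theory Submission
  imports Defs "HOL-Combinatorics.Permutations" "HOL-Combinatorics.Perm"
begin

text \<open>
  The lift can be read off from the biset without choosing a basis. For \<open>y \<in> X\<close> let \<open>d\<close> be the
  length of the cycle of \<open>g\<close> on the orbit space \<open>H\X\<close> through \<open>Hy\<close>; then \<open>y g\<^sup>d = k y\<close> for a
  unique \<open>k \<in> H\<close> by freeness. The pair \<open>(d, k\<^sup>H)\<close> does not change when \<open>y\<close> is replaced by
  \<open>h y\<close> (then \<open>k\<close> becomes \<open>h k h\<^sup>-\<^sup>1\<close>), nor when \<open>(y, g)\<close> is replaced by \<open>(y x\<^sup>-\<^sup>1, x g x\<^sup>-\<^sup>1)\<close>.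
  For \<open>y = s\<close> in a basis, \<open>d\<close> is the length of the \<open>\<pi>\<close>-cycle through \<open>s\<close> and \<open>k\<close> is the cycle
  product starting at \<open>s\<close>, so the multiset of these pairs over a basis lists every entry
  \<open>(d\<^sub>j, k\<^sub>j\<^sup>H)\<close> of the lift \<open>d\<^sub>j\<close> times. Any two bases meet every \<open>H\<close>-orbit once and
  right translation by \<open>x\<^sup>-\<^sup>1\<close> maps bases to bases, so these multisets agree; as all degrees are
  positive, the lift is determined by them.
\<close>

section \<open>Cycles of an injective self-map of a finite set\<close>

lemma self_in_perm_orbit: "x \<in> perm_orbit f x"
  unfolding perm_orbit_def by (auto intro: exI[of _ 0])

lemma funpow_in_set: "f ` S \<subseteq> S \<Longrightarrow> x \<in> S \<Longrightarrow> (f ^^ n) x \<in> S"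
  by (induction n) auto

lemma finite_self_map_extends_to_perm:
  assumes "finite S" "inj_on f S" "f ` S \<subseteq> S"
  obtains \<sigma> :: "'a perm" where "\<And>x n. x \<in> S \<Longrightarrow> apply (\<sigma> ^ n) x = (f ^^ n) x"
proof -
  define F where "F x = (if x \<in> S then f x else x)" for x
  have "bij_betw f S S"
    using assms by (simp add: bij_betw_def endo_inj_surj)
  then have "bij_betw F S S"
    by (rule bij_betw_cong[THEN iffD1, rotated]) (simp add: F_def)
  then have "F permutes S"
    by (rule bij_imp_permutes) (simp add: F_def)
  then have "permutation F"
    using assms(1) permutation_permutes by blast
  then have "apply (Perm F) = F"
    by (simp add: Perm_inverse permutation_bijective permutation_finite_support)
  then have "apply (Perm F ^ n) x = (f ^^ n) x" if "x \<in> S" for x n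
    using that by (induction n) (auto simp: apply_times F_def funpow_in_set[OF assms(3)])
  then show thesis
    using that by blast
qed

lemma perm_orbit_eq_orbit:
  assumes "\<And>n. apply (\<sigma> ^ n) x = (f ^^ n) x"
  shows "perm_orbit f x = orbit \<sigma> x"
  using assms by (auto simp: perm_orbit_def orbit_def)

context
  fixes f :: "'a \<Rightarrow> 'a" and S :: "'a set"
  assumes finite: "finite S" and inj: "inj_on f S" and into: "f ` S \<subseteq> S"
begin

lemma perm_orbit_subset: "x \<in> S \<Longrightarrow> perm_orbit f x \<subseteq> S"
  using into by (auto simp: perm_orbit_def intro: funpow_in_set)

lemma funpow_card_perm_orbit:
  assumes x: "x \<in> S"
  shows "(f ^^ card (perm_orbit f x)) x = x"
proof -
  obtain \<sigma> where \<sigma>: "\<And>x n. x \<in> S \<Longrightarrow> apply (\<sigma> ^ n) x = (f ^^ n) x"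
    using finite_self_map_extends_to_perm[OF finite inj into] by blast
  have "perm_orbit f x = orbit \<sigma> x"
    by (rule perm_orbit_eq_orbit) (rule \<sigma>[OF x])
  then have "card (perm_orbit f x) = order \<sigma> x"
    by simp
  then show ?thesis
    using \<sigma>[OF x, of "order \<sigma> x"] apply_power_order[of \<sigma> x] by simp
qed

lemma perm_orbit_eqI:
  assumes x: "x \<in> S" and y: "y \<in> perm_orbit f x"
  shows "perm_orbit f y = perm_orbit f x"
proof -
  obtain \<sigma> where \<sigma>: "\<And>x n. x \<in> S \<Longrightarrow> apply (\<sigma> ^ n) x = (f ^^ n) x"
    using finite_self_map_extends_to_perm[OF finite inj into] by blast
  have "y \<in> S"
    using perm_orbit_subset[OF x] y by blast
  have "perm_orbit f x = orbit \<sigma> x" "perm_orbit f y = orbit \<sigma> y"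
    by (rule perm_orbit_eq_orbit, rule \<sigma>, fact)+
  then show ?thesis
    using orbit_equiv[of y \<sigma> x] y by simp
qed

end

text \<open>Over a basis every cycle of length \<open>d\<close> is met \<open>d\<close> times, which is what \<open>repeat_fst\<close> records.\<close>
definition repeat_fst :: "(nat \<times> 'a) multiset \<Rightarrow> (nat \<times> 'a) multiset" where
  "repeat_fst M = (\<Sum>v\<in>#M. replicate_mset (fst v) v)"

lemma count_repeat_fst: "count (repeat_fst M) v = fst v * count M v"
  by (induction M) (auto simp: repeat_fst_def)

lemma repeat_fst_inj:
  assumes "\<forall>v\<in>#M. 0 < fst v" "\<forall>v\<in>#N. 0 < fst v" "repeat_fst M = repeat_fst N"
  shows "M = N"
proof (rule multiset_eqI)
  fix v
  show "count M v = count N v"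
  proof (cases "fst v = 0")
    case True
    then show ?thesis
      using assms(1,2) by (metis count_inI less_irrefl)
  next
    case False
    then show ?thesis
      using arg_cong[OF assms(3), of "\<lambda>M. count M v"] by (simp add: count_repeat_fst)
  qed
qed

lemma image_mset_mset_set_partition:
  assumes "finite P" "\<forall>Q\<in>P. finite Q" "pairwise disjnt P"
    and "\<And>Q s. Q \<in> P \<Longrightarrow> s \<in> Q \<Longrightarrow> f s = F Q"
  shows "image_mset f (mset_set (\<Union>P)) = (\<Sum>Q\<in>P. replicate_mset (card Q) (F Q))"
  using assms
proof (induction P rule: finite_induct)
  case (insert Q P)
  have IH: "image_mset f (mset_set (\<Union>P)) = (\<Sum>Q\<in>P. replicate_mset (card Q) (F Q))"
    using insert.prems by (intro insert.IH) (auto simp: pairwise_insert)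
  have "Q \<inter> \<Union>P = {}"
    using insert.hyps(2) insert.prems(2) by (auto simp: pairwise_insert disjnt_def)
  then have "mset_set (\<Union>(insert Q P)) = mset_set Q + mset_set (\<Union>P)"
    using insert.hyps(1) insert.prems(1) by (simp add: mset_set_Union)
  moreover have "image_mset f (mset_set Q) = image_mset (\<lambda>_. F Q) (mset_set Q)"
    using insert.prems(1,3) by (intro image_mset_cong) simp
  ultimately show ?case
    using insert.hyps IH by (simp add: image_mset_const_eq)
qed simp

lemma (in group) conj_nat_pow:
  assumes "x \<in> carrier G" "g \<in> carrier G"
  shows "(x \<otimes> g \<otimes> inv x) [^] (n::nat) = x \<otimes> g [^] n \<otimes> inv x"
  using assms by (induction n) (simp_all add: m_assoc inv_solve_left')

lemma (in group) conj_class_conj: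
  assumes "a \<in> carrier G" "k \<in> carrier G"
  shows "conj_class G (a \<otimes> k \<otimes> inv a) = conj_class G k"
proof -
  have cancel: "inv a \<otimes> (a \<otimes> z) = z" "a \<otimes> (inv a \<otimes> z) = z" if "z \<in> carrier G" for z
    using that assms by (simp_all add: m_assoc[symmetric])
  have "x \<otimes> (a \<otimes> k \<otimes> inv a) \<otimes> inv x = (x \<otimes> a) \<otimes> k \<otimes> inv (x \<otimes> a)"
    if "x \<in> carrier G" for x
    using that assms by (simp add: m_assoc inv_mult_group cancel)
  moreover have "x \<otimes> k \<otimes> inv x = (x \<otimes> inv a) \<otimes> (a \<otimes> k \<otimes> inv a) \<otimes> inv (x \<otimes> inv a)"
    if "x \<in> carrier G" for x
    using that assms by (simp add: m_assoc inv_mult_group cancel)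
  ultimately show ?thesis
    unfolding conj_class_def using assms by (blast intro: m_closed inv_closed)
qed

section \<open>Left-free bisets\<close>

locale left_free_biset =
  fixes H :: "('h, 'a) monoid_scheme" and G :: "('g, 'c) monoid_scheme"
    and X :: "'b set" and l :: "'h \<Rightarrow> 'b \<Rightarrow> 'b" and r :: "'b \<Rightarrow> 'g \<Rightarrow> 'b"
  assumes biset: "biset H G X l r" and left_free: "left_free H X l"
begin

sublocale H: group H
  using biset by (simp add: biset_def)

sublocale G: group G
  using biset by (simp add: biset_def)

lemma l_closed: "h \<in> carrier H \<Longrightarrow> b \<in> X \<Longrightarrow> l h b \<in> X"
  and l_one: "b \<in> X \<Longrightarrow> l \<one>\<^bsub>H\<^esub> b = b"
  and l_mult: "h1 \<in> carrier H \<Longrightarrow> h2 \<in> carrier H \<Longrightarrow> b \<in> X \<Longrightarrow> l (h1 \<otimes>\<^bsub>H\<^esub> h2) b = l h1 (l h2 b)"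
  and r_closed: "g \<in> carrier G \<Longrightarrow> b \<in> X \<Longrightarrow> r b g \<in> X"
  and r_one: "b \<in> X \<Longrightarrow> r b \<one>\<^bsub>G\<^esub> = b"
  and r_mult: "g1 \<in> carrier G \<Longrightarrow> g2 \<in> carrier G \<Longrightarrow> b \<in> X \<Longrightarrow> r b (g1 \<otimes>\<^bsub>G\<^esub> g2) = r (r b g1) g2"
  and l_r_commute: "h \<in> carrier H \<Longrightarrow> g \<in> carrier G \<Longrightarrow> b \<in> X \<Longrightarrow> l h (r b g) = r (l h b) g"
  using biset unfolding biset_def by blast+

lemma l_inv_l: "h \<in> carrier H \<Longrightarrow> b \<in> X \<Longrightarrow> l (inv\<^bsub>H\<^esub> h) (l h b) = b"
  by (simp add: l_mult[symmetric] l_one)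

lemma r_r_inv: "g \<in> carrier G \<Longrightarrow> b \<in> X \<Longrightarrow> r (r b g) (inv\<^bsub>G\<^esub> g) = b"
  by (simp add: r_mult[symmetric] r_one)

lemma inj_on_r: "g \<in> carrier G \<Longrightarrow> inj_on (\<lambda>b. r b g) X"
  by (rule inj_onI) (metis r_r_inv)

text \<open>Freeness of the left action, the only consequence of left-freeness used.\<close>
lemma l_cancel:
  assumes "b \<in> X" "h \<in> carrier H" "h' \<in> carrier H" "l h b = l h' b"
  shows "h = h'"
proof -
  obtain S where S: "S \<subseteq> X" "bij_betw (\<lambda>(h, s). l h s) (carrier H \<times> S) X"
    using left_free unfolding left_free_def by blast
  then obtain a s where as: "a \<in> carrier H" "s \<in> S" "b = l a s"
    using assms(1) unfolding bij_betw_def by force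
  then have "l (h \<otimes>\<^bsub>H\<^esub> a) s = l (h' \<otimes>\<^bsub>H\<^esub> a) s"
    using assms S(1) by (auto simp: l_mult)
  then have "(h \<otimes>\<^bsub>H\<^esub> a, s) = (h' \<otimes>\<^bsub>H\<^esub> a, s)"
    using S(2) as assms(2,3) unfolding bij_betw_def inj_on_def by (metis (no_types) H.m_closed SigmaI case_prod_conv)
  then show ?thesis
    using as assms by simp
qed

lemma left_orbit_l:
  assumes "h \<in> carrier H" "b \<in> X"
  shows "left_orbit H l (l h b) = left_orbit H l b"
proof (rule Set.set_eqI, rule iffI)
  fix w assume "w \<in> left_orbit H l (l h b)"
  then obtain c where "c \<in> carrier H" "w = l c (l h b)"
    unfolding left_orbit_def by blast
  with assms have "c \<otimes>\<^bsub>H\<^esub> h \<in> carrier H" "w = l (c \<otimes>\<^bsub>H\<^esub> h) b"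
    by (simp_all add: l_mult)
  then show "w \<in> left_orbit H l b"
    unfolding left_orbit_def by blast
next
  fix w assume "w \<in> left_orbit H l b"
  then obtain c where "c \<in> carrier H" "w = l c b"
    unfolding left_orbit_def by blast
  with assms have "c \<otimes>\<^bsub>H\<^esub> inv\<^bsub>H\<^esub> h \<in> carrier H" "w = l (c \<otimes>\<^bsub>H\<^esub> inv\<^bsub>H\<^esub> h) (l h b)"
    by (simp_all add: l_mult[symmetric] H.m_assoc)
  then show "w \<in> left_orbit H l (l h b)"
    unfolding left_orbit_def by blast
qed

lemma self_in_left_orbit: "b \<in> X \<Longrightarrow> b \<in> left_orbit H l b"
  unfolding left_orbit_def using l_one by force

lemma left_orbit_r:
  assumes "g \<in> carrier G" "b \<in> X"
  shows "left_orbit H l (r b g) = (\<lambda>c. r c g) ` left_orbit H l b"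
proof -
  have "(\<lambda>h. l h (r b g)) ` carrier H = (\<lambda>h. r (l h b) g) ` carrier H"
    using assms by (simp add: l_r_commute)
  then show ?thesis
    unfolding left_orbit_def Setcompr_eq_image image_image .
qed

lemma left_orbit_subset: "b \<in> X \<Longrightarrow> left_orbit H l b \<subseteq> X"
  unfolding left_orbit_def using l_closed by blast

definition cycle_degree :: "'g \<Rightarrow> 'b \<Rightarrow> nat" where
  "cycle_degree g y = card (range (\<lambda>n::nat. left_orbit H l (r y (g [^]\<^bsub>G\<^esub> n))))"

definition cycle_return :: "'g \<Rightarrow> 'b \<Rightarrow> 'h" where
  "cycle_return g y = (THE k. k \<in> carrier H \<and> r y (g [^]\<^bsub>G\<^esub> cycle_degree g y) = l k y)"

definition cycle_type :: "'g \<Rightarrow> 'b \<Rightarrow> nat \<times> 'h set" where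
  "cycle_type g y = (cycle_degree g y, conj_class H (cycle_return g y))"

lemma cycle_return_eqI:
  assumes "y \<in> X" "k \<in> carrier H" "r y (g [^]\<^bsub>G\<^esub> cycle_degree g y) = l k y"
  shows "cycle_return g y = k"
  unfolding cycle_return_def
  using assms l_cancel by (intro the_equality) auto

lemma cycle_degree_l:
  assumes "h \<in> carrier H" "y \<in> X" "g \<in> carrier G"
  shows "cycle_degree g (l h y) = cycle_degree g y"
proof -
  have "left_orbit H l (r (l h y) (g [^]\<^bsub>G\<^esub> n)) = left_orbit H l (r y (g [^]\<^bsub>G\<^esub> n))" for n :: nat
    using assms by (simp add: l_r_commute[symmetric] left_orbit_l r_closed)
  then show ?thesis
    unfolding cycle_degree_def by simp
qed

lemma cycle_type_l:
  assumes "a \<in> carrier H" "y \<in> X" "g \<in> carrier G"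
    and "k \<in> carrier H" "r y (g [^]\<^bsub>G\<^esub> cycle_degree g y) = l k y"
  shows "cycle_type g (l a y) = cycle_type g y"
proof -
  let ?d = "cycle_degree g y" and ?k' = "a \<otimes>\<^bsub>H\<^esub> k \<otimes>\<^bsub>H\<^esub> inv\<^bsub>H\<^esub> a"
  have "r (l a y) (g [^]\<^bsub>G\<^esub> ?d) = l a (l k y)"
    using assms by (simp add: l_r_commute[symmetric])
  also have "\<dots> = l ?k' (l a y)"
    using assms by (simp add: l_mult[symmetric] H.m_assoc)
  finally have "cycle_return g (l a y) = ?k'"
    using assms by (intro cycle_return_eqI) (simp_all add: l_closed cycle_degree_l)
  moreover have "cycle_return g y = k"
    by (rule cycle_return_eqI[OF assms(2,4,5)])
  ultimately show ?thesis
    unfolding cycle_type_def using assms by (simp add: cycle_degree_l H.conj_class_conj)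
qed

lemma cycle_type_conj:
  assumes "x \<in> carrier G" "g \<in> carrier G" "y \<in> X"
    and "k \<in> carrier H" "r y (g [^]\<^bsub>G\<^esub> cycle_degree g y) = l k y"
  shows "cycle_type (x \<otimes>\<^bsub>G\<^esub> g \<otimes>\<^bsub>G\<^esub> inv\<^bsub>G\<^esub> x) (r y (inv\<^bsub>G\<^esub> x)) = cycle_type g y"
proof -
  let ?g' = "x \<otimes>\<^bsub>G\<^esub> g \<otimes>\<^bsub>G\<^esub> inv\<^bsub>G\<^esub> x" and ?\<phi> = "\<lambda>c. r c (inv\<^bsub>G\<^esub> x)"
  have pow: "r (?\<phi> y) (?g' [^]\<^bsub>G\<^esub> n) = ?\<phi> (r y (g [^]\<^bsub>G\<^esub> n))" for n :: nat
    using assms by (simp add: G.conj_nat_pow r_mult[symmetric] G.m_assoc[symmetric])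
  have "range (\<lambda>n::nat. left_orbit H l (r (?\<phi> y) (?g' [^]\<^bsub>G\<^esub> n)))
      = (image ?\<phi>) ` range (\<lambda>n::nat. left_orbit H l (r y (g [^]\<^bsub>G\<^esub> n)))"
    using assms by (auto simp: pow left_orbit_r r_closed)
  moreover have "left_orbit H l (r y (g [^]\<^bsub>G\<^esub> n)) \<subseteq> X" for n :: nat
    using assms by (simp add: left_orbit_subset r_closed)
  then have "inj_on (image ?\<phi>) (range (\<lambda>n::nat. left_orbit H l (r y (g [^]\<^bsub>G\<^esub> n))))"
    using assms by (intro inj_on_image inj_on_subset[OF inj_on_r]) auto
  ultimately have degree: "cycle_degree ?g' (?\<phi> y) = cycle_degree g y"
    unfolding cycle_degree_def by (simp add: card_image)
  have "r (?\<phi> y) (?g' [^]\<^bsub>G\<^esub> cycle_degree ?g' (?\<phi> y)) = l k (?\<phi> y)"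
    using assms by (simp add: degree pow l_r_commute)
  then have "cycle_return ?g' (?\<phi> y) = k"
    using assms by (intro cycle_return_eqI) (simp_all add: r_closed)
  then show ?thesis
    unfolding cycle_type_def using degree cycle_return_eqI[OF assms(3-5)] by simp
qed

end

section \<open>Bases and the wreath map\<close>

locale biset_basis = left_free_biset H G X l r
  for H :: "('h, 'a) monoid_scheme" and G :: "('g, 'c) monoid_scheme"
    and X :: "'b set" and l :: "'h \<Rightarrow> 'b \<Rightarrow> 'b" and r :: "'b \<Rightarrow> 'g \<Rightarrow> 'b" +
  fixes S :: "'b set"
  assumes basis: "is_basis H X l S"
begin

lemma basis_subset: "S \<subseteq> X"
  using basis unfolding is_basis_def by blast

lemma basis_decomp:
  assumes "y \<in> X"
  obtains h s where "h \<in> carrier H" "s \<in> S" "y = l h s"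
proof -
  obtain s where "s \<in> S" "s \<in> left_orbit H l y"
    using basis assms unfolding is_basis_def by blast
  then obtain a where "a \<in> carrier H" "s \<in> S" "s = l a y"
    unfolding left_orbit_def by blast
  moreover have "y = l (inv\<^bsub>H\<^esub> a) s"
    using calculation assms by (simp add: l_inv_l)
  ultimately show thesis
    using that H.inv_closed by blast
qed

lemma basis_unique:
  assumes "s \<in> S" "t \<in> S" "h \<in> carrier H" "h' \<in> carrier H" "l h s = l h' t"
  shows "s = t \<and> h = h'"
proof -
  let ?y = "l h s"
  have X: "s \<in> X" "t \<in> X" "?y \<in> X"
    using assms basis_subset by (auto simp: l_closed)
  have "left_orbit H l ?y = left_orbit H l s"
    by (rule left_orbit_l[OF assms(3) X(1)])
  moreover have "left_orbit H l ?y = left_orbit H l t"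
    unfolding assms(5) by (rule left_orbit_l[OF assms(4) X(2)])
  ultimately have "s \<in> left_orbit H l ?y" "t \<in> left_orbit H l ?y"
    using X self_in_left_orbit by auto
  moreover have "\<exists>!u. u \<in> S \<and> u \<in> left_orbit H l ?y"
    using basis X(3) unfolding is_basis_def by blast
  ultimately have "s = t"
    using assms(1,2) by blast
  moreover have "h = h'"
    using assms(5) l_cancel[OF X(1) assms(3,4)] calculation by simp
  ultimately show ?thesis ..
qed

lemma bij_betw_left_orbit: "bij_betw (left_orbit H l) S (left_orbit H l ` X)"
proof (rule bij_betw_imageI)
  show "inj_on (left_orbit H l) S"
  proof (rule inj_onI)
    fix s t assume st: "s \<in> S" "t \<in> S" "left_orbit H l s = left_orbit H l t"
    then have "s \<in> left_orbit H l t"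
      using basis_subset self_in_left_orbit by blast
    then obtain a where a: "a \<in> carrier H" "s = l a t"
      unfolding left_orbit_def by blast
    then have "l \<one>\<^bsub>H\<^esub> s = l a t"
      using st(1) basis_subset l_one by auto
    then show "s = t"
      using basis_unique[OF st(1,2) H.one_closed a(1)] by blast
  qed
  have "left_orbit H l y \<in> left_orbit H l ` S" if y: "y \<in> X" for y
  proof -
    obtain h s where "h \<in> carrier H" "s \<in> S" "y = l h s"
      using basis_decomp[OF y] .
    then show ?thesis
      using basis_subset left_orbit_l by auto
  qed
  then show "left_orbit H l ` S = left_orbit H l ` X"
    using basis_subset by blast
qed

lemma basis_change:
  assumes "is_basis H X l S'" "finite S"
    and "\<And>a y. a \<in> carrier H \<Longrightarrow> y \<in> X \<Longrightarrow> f (l a y) = f y"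
  shows "finite S'" "image_mset f (mset_set S') = image_mset f (mset_set S)"
proof -
  interpret S': biset_basis H G X l r S'
    using assms(1) by unfold_locales
  define \<beta> where "\<beta> = the_inv_into S' (left_orbit H l) \<circ> left_orbit H l"
  have bij: "bij_betw \<beta> S S'"
    unfolding \<beta>_def
    by (rule bij_betw_trans[OF bij_betw_left_orbit bij_betw_the_inv_into[OF S'.bij_betw_left_orbit]])
  then show "finite S'"
    using assms(2) bij_betw_finite by blast
  have "f (\<beta> s) = f s" if s: "s \<in> S" for s
  proof -
    have "left_orbit H l (\<beta> s) = left_orbit H l s"
      unfolding \<beta>_def comp_apply
      by (rule f_the_inv_into_f_bij_betw[OF S'.bij_betw_left_orbit]) (use s basis_subset in blast)
    moreover have "\<beta> s \<in> X"
      using bij s S'.basis_subset by (auto dest: bij_betwE)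
    ultimately have "\<beta> s \<in> left_orbit H l s"
      using self_in_left_orbit by metis
    then obtain a where "a \<in> carrier H" "\<beta> s = l a s"
      unfolding left_orbit_def by blast
    then show ?thesis
      using assms(3) s basis_subset by auto
  qed
  then have "image_mset f (image_mset \<beta> (mset_set S)) = image_mset f (mset_set S)"
    using assms(2) by (simp add: multiset.map_comp comp_def) (intro image_mset_cong; simp)
  moreover have "image_mset \<beta> (mset_set S) = mset_set S'"
    using bij by (simp add: image_mset_mset_set bij_betw_def)
  ultimately show "image_mset f (mset_set S') = image_mset f (mset_set S)"
    by simp
qed

lemma is_basis_r:
  assumes x: "x \<in> carrier G"
  shows "is_basis H X l ((\<lambda>s. r s x) ` S)"
  unfolding is_basis_def
proof (intro conjI ballI)
  show "(\<lambda>s. r s x) ` S \<subseteq> X"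
    using basis_subset x r_closed by blast
next
  fix b assume b: "b \<in> X"
  let ?y = "r b (inv\<^bsub>G\<^esub> x)"
  have y: "?y \<in> X" "r ?y x = b"
    using b x r_r_inv[of "inv\<^bsub>G\<^esub> x"] by (simp_all add: r_closed)
  have orbit_iff: "r s x \<in> left_orbit H l b \<longleftrightarrow> s \<in> left_orbit H l ?y" if "s \<in> S" for s
  proof -
    have "s \<in> X"
      using that basis_subset by blast
    then have "r s x \<in> (\<lambda>c. r c x) ` left_orbit H l ?y \<longleftrightarrow> s \<in> left_orbit H l ?y"
      by (rule inj_on_image_mem_iff[OF inj_on_r[OF x] _ left_orbit_subset[OF y(1)]])
    then show ?thesis
      using left_orbit_r[OF x y(1)] y(2) by simp
  qed
  obtain s where s: "s \<in> S" "s \<in> left_orbit H l ?y"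
    and unique: "\<And>t. t \<in> S \<Longrightarrow> t \<in> left_orbit H l ?y \<Longrightarrow> t = s"
    using basis y(1) unfolding is_basis_def by metis
  show "\<exists>!u. u \<in> (\<lambda>s. r s x) ` S \<and> u \<in> left_orbit H l b"
  proof (rule ex1I[of _ "r s x"])
    show "r s x \<in> (\<lambda>s. r s x) ` S \<and> r s x \<in> left_orbit H l b"
      using s orbit_iff by blast
    fix u assume "u \<in> (\<lambda>s. r s x) ` S \<and> u \<in> left_orbit H l b"
    then obtain t where "t \<in> S" "u = r t x" "r t x \<in> left_orbit H l b"
      by blast
    then show "u = r s x"
      using orbit_iff unique by blast
  qed
qed

abbreviation \<pi> :: "'g \<Rightarrow> 'b \<Rightarrow> 'b" where
  "\<pi> g \<equiv> wperm H l r S g"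

abbreviation coef :: "'g \<Rightarrow> 'b \<Rightarrow> 'h" where
  "coef g \<equiv> wcoef H l r S g"

context
  fixes g assumes g: "g \<in> carrier G"
begin

lemma wreath_coords:
  assumes "s \<in> S"
  shows "\<pi> g s \<in> S" "coef g s \<in> carrier H" "r s g = l (coef g s) (\<pi> g s)"
proof -
  obtain h t where ht: "h \<in> carrier H" "t \<in> S" "r s g = l h t"
    using basis_decomp r_closed[OF g] assms basis_subset by (metis subsetD)
  have "\<pi> g s = t"
    unfolding wperm_def using ht basis_unique by (intro the_equality) auto
  moreover have "coef g s = h"
    unfolding wcoef_def calculation using ht basis_unique by (intro the_equality) auto
  ultimately show "\<pi> g s \<in> S" "coef g s \<in> carrier H" "r s g = l (coef g s) (\<pi> g s)"
    using ht by auto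
qed

lemma wperm_into: "\<pi> g ` S \<subseteq> S"
  using wreath_coords by blast

lemma inj_on_wperm: "inj_on (\<pi> g) S"
proof (rule inj_onI)
  fix s t assume st: "s \<in> S" "t \<in> S" "\<pi> g s = \<pi> g t"
  let ?c = "coef g t \<otimes>\<^bsub>H\<^esub> inv\<^bsub>H\<^esub> coef g s"
  have X: "s \<in> X" "t \<in> X"
    using st basis_subset by auto
  have "\<pi> g s \<in> X"
    using wreath_coords(1)[OF st(1)] basis_subset by blast
  have c: "?c \<in> carrier H"
    using st wreath_coords by simp
  have "r (l ?c s) g = l ?c (l (coef g s) (\<pi> g s))"
    using c X g st(1) by (simp add: l_r_commute[symmetric] wreath_coords)
  also have "\<dots> = r t g"
    using st \<open>\<pi> g s \<in> X\<close> by (simp add: wreath_coords l_mult[symmetric] H.m_assoc)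
  finally have "l ?c s = t"
    using inj_onD[OF inj_on_r[OF g]] c X by (simp add: l_closed)
  then have "l ?c s = l \<one>\<^bsub>H\<^esub> t"
    using X by (simp add: l_one)
  then show "s = t"
    using basis_unique[OF st(1,2) c H.one_closed] by blast
qed

lemma r_nat_pow_basis:
  assumes "s \<in> S"
  shows "cycle_prod H l r S g s n \<in> carrier H \<and>
    r s (g [^]\<^bsub>G\<^esub> n) = l (cycle_prod H l r S g s n) ((\<pi> g ^^ n) s)"
  using assms
proof (induction n arbitrary: s)
  case 0
  then show ?case
    using basis_subset by (auto simp: l_one r_one)
next
  case (Suc n)
  let ?t = "\<pi> g s"
  have s: "s \<in> X" "?t \<in> S" "?t \<in> X"
    using Suc.prems basis_subset wreath_coords(1)[OF Suc.prems] by auto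
  have "r s (g [^]\<^bsub>G\<^esub> Suc n) = r (r s g) (g [^]\<^bsub>G\<^esub> n)"
    using g s by (simp only: G.nat_pow_Suc2[OF g]) (simp add: r_mult)
  also have "\<dots> = l (coef g s) (r ?t (g [^]\<^bsub>G\<^esub> n))"
    using g s Suc.prems by (simp add: wreath_coords l_r_commute)
  also have "\<dots> = l (coef g s \<otimes>\<^bsub>H\<^esub> cycle_prod H l r S g ?t n) ((\<pi> g ^^ n) ?t)"
    using Suc.IH[OF s(2)] s funpow_in_set[OF wperm_into s(2), of n] basis_subset
    by (auto simp: l_mult wreath_coords Suc.prems)
  finally show ?case
    using Suc.IH[OF s(2)] Suc.prems by (simp add: wreath_coords funpow_Suc_right del: funpow.simps)
qed

lemma cycle_prod_closed: "s \<in> S \<Longrightarrow> cycle_prod H l r S g s n \<in> carrier H"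
  using r_nat_pow_basis by blast

lemma cycle_prod_add:
  assumes "s \<in> S"
  shows "cycle_prod H l r S g s (m + n) =
    cycle_prod H l r S g s m \<otimes>\<^bsub>H\<^esub> cycle_prod H l r S g ((\<pi> g ^^ m) s) n"
  using assms
proof (induction m arbitrary: s)
  case 0
  then show ?case
    using cycle_prod_closed by simp
next
  case (Suc m)
  have "\<pi> g s \<in> S" "coef g s \<in> carrier H"
    using Suc.prems wreath_coords by auto
  then show ?case
    using Suc.IH cycle_prod_closed funpow_in_set[OF wperm_into]
    by (simp add: H.m_assoc funpow_Suc_right del: funpow.simps)
qed

text \<open>Rotating the cycle conjugates the product by the first coefficient.\<close>
lemma conj_class_cycle_prod_wperm:
  assumes "s \<in> S" "(\<pi> g ^^ d) s = s"
  shows "conj_class H (cycle_prod H l r S g (\<pi> g s) d) = conj_class H (cycle_prod H l r S g s d)"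
proof -
  let ?k = "cycle_prod H l r S g s d" and ?k' = "cycle_prod H l r S g (\<pi> g s) d" and ?h = "coef g s"
  have closed: "?h \<in> carrier H" "?k \<in> carrier H" "?k' \<in> carrier H"
    using assms wreath_coords cycle_prod_closed by auto
  have "?k \<otimes>\<^bsub>H\<^esub> ?h = cycle_prod H l r S g s (d + 1)"
    using cycle_prod_add[OF assms(1), of d 1] assms closed by simp
  also have "\<dots> = ?h \<otimes>\<^bsub>H\<^esub> ?k'"
    using cycle_prod_add[OF assms(1), of 1 d] closed by simp
  finally have "?k' = inv\<^bsub>H\<^esub> ?h \<otimes>\<^bsub>H\<^esub> (?k \<otimes>\<^bsub>H\<^esub> ?h)"
    using closed H.inv_solve_left by simp
  then have "?k' = inv\<^bsub>H\<^esub> ?h \<otimes>\<^bsub>H\<^esub> ?k \<otimes>\<^bsub>H\<^esub> inv\<^bsub>H\<^esub> (inv\<^bsub>H\<^esub> ?h)"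
    using closed by (simp add: H.m_assoc)
  then show ?thesis
    using H.conj_class_conj[of "inv\<^bsub>H\<^esub> ?h" ?k] closed by simp
qed

lemma conj_class_cycle_prod_funpow:
  assumes "s \<in> S" "(\<pi> g ^^ d) s = s"
  shows "conj_class H (cycle_prod H l r S g ((\<pi> g ^^ i) s) d) = conj_class H (cycle_prod H l r S g s d)"
proof (induction i)
  case (Suc i)
  have "(\<pi> g ^^ d) ((\<pi> g ^^ i) s) = (\<pi> g ^^ (d + i)) s"
    "(\<pi> g ^^ i) ((\<pi> g ^^ d) s) = (\<pi> g ^^ (i + d)) s"
    by (simp_all only: funpow_add comp_apply)
  then have "(\<pi> g ^^ d) ((\<pi> g ^^ i) s) = (\<pi> g ^^ i) s"
    using assms(2) by (simp add: add.commute)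
  then show ?case
    using conj_class_cycle_prod_wperm funpow_in_set[OF wperm_into assms(1)] Suc by simp
qed simp

end

end

section \<open>Finite bases and the lift\<close>

locale finite_biset_basis = biset_basis +
  assumes finite_basis: "finite S"
begin

context
  fixes g assumes g: "g \<in> carrier G"
begin

lemmas wperm_self_map = finite_basis inj_on_wperm[OF g] wperm_into[OF g]

lemma cycle_degree_basis:
  assumes "s \<in> S"
  shows "cycle_degree g s = card (perm_orbit (\<pi> g) s)"
proof -
  have "left_orbit H l (r s (g [^]\<^bsub>G\<^esub> n)) = left_orbit H l ((\<pi> g ^^ n) s)" for n
  proof -
    have "(\<pi> g ^^ n) s \<in> X"
      using funpow_in_set[OF wperm_into[OF g] assms] basis_subset by blast
    then show ?thesis
      using r_nat_pow_basis[OF g assms, of n] left_orbit_l by simp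
  qed
  then have "range (\<lambda>n::nat. left_orbit H l (r s (g [^]\<^bsub>G\<^esub> n))) = range (\<lambda>n. left_orbit H l ((\<pi> g ^^ n) s))"
    by simp
  also have "\<dots> = left_orbit H l ` perm_orbit (\<pi> g) s"
    unfolding perm_orbit_def by blast
  finally have "range (\<lambda>n::nat. left_orbit H l (r s (g [^]\<^bsub>G\<^esub> n))) = left_orbit H l ` perm_orbit (\<pi> g) s" .
  moreover have "inj_on (left_orbit H l) (perm_orbit (\<pi> g) s)"
    using bij_betw_imp_inj_on[OF bij_betw_left_orbit] perm_orbit_subset[OF wperm_self_map assms]
    by (rule inj_on_subset)
  ultimately show ?thesis
    unfolding cycle_degree_def by (simp add: card_image)
qed

lemma r_cycle_degree_basis:
  assumes "s \<in> S"
  shows "r s (g [^]\<^bsub>G\<^esub> cycle_degree g s) = l (cycle_prod H l r S g s (cycle_degree g s)) s"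
  using r_nat_pow_basis[OF g assms] funpow_card_perm_orbit[OF wperm_self_map assms]
  by (simp add: cycle_degree_basis[OF assms])

lemma cycle_type_basis:
  assumes "s \<in> S"
  shows "cycle_type g s = (card (perm_orbit (\<pi> g) s),
    conj_class H (cycle_prod H l r S g s (card (perm_orbit (\<pi> g) s))))"
proof -
  have "cycle_return g s = cycle_prod H l r S g s (cycle_degree g s)"
    using assms basis_subset cycle_prod_closed[OF g assms] r_cycle_degree_basis[OF assms]
    by (intro cycle_return_eqI) auto
  then show ?thesis
    unfolding cycle_type_def by (simp add: cycle_degree_basis[OF assms])
qed

lemma cycle_type_l_eq:
  assumes "a \<in> carrier H" "y \<in> X"
  shows "cycle_type g (l a y) = cycle_type g y"
proof -
  obtain b s where bs: "b \<in> carrier H" "s \<in> S" "y = l b s"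
    using basis_decomp[OF assms(2)] .
  have s: "s \<in> X"
    using bs basis_subset by blast
  have "cycle_type g (l h s) = cycle_type g s" if "h \<in> carrier H" for h
    using cycle_type_l[OF that s g cycle_prod_closed[OF g bs(2)] r_cycle_degree_basis[OF bs(2)]] .
  then show ?thesis
    using assms bs s by (simp add: l_mult[symmetric])
qed

lemma wreath_orbit_eq:
  assumes "Q \<in> wreath_orbits H l r S g" "t \<in> Q"
  shows "t \<in> S" "perm_orbit (\<pi> g) t = Q"
proof -
  from assms(1) have "Q \<in> perm_orbit (\<pi> g) ` S"
    unfolding wreath_orbits_def .
  then obtain s where "s \<in> S" "Q = perm_orbit (\<pi> g) s"
    by blast
  then show "t \<in> S" "perm_orbit (\<pi> g) t = Q"
    using assms(2) perm_orbit_subset[OF wperm_self_map] perm_orbit_eqI[OF wperm_self_map] by blast+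
qed

lemma Union_wreath_orbits: "\<Union>(wreath_orbits H l r S g) = S"
proof (rule equalityI)
  show "\<Union>(wreath_orbits H l r S g) \<subseteq> S"
    using wreath_orbit_eq(1) by (meson UnionE subsetI)
  show "S \<subseteq> \<Union>(wreath_orbits H l r S g)"
  proof
    fix s assume "s \<in> S"
    then have "perm_orbit (\<pi> g) s \<in> wreath_orbits H l r S g"
      unfolding wreath_orbits_def by (rule imageI)
    then show "s \<in> \<Union>(wreath_orbits H l r S g)"
      using self_in_perm_orbit by (rule UnionI)
  qed
qed

lemma disjoint_wreath_orbits: "pairwise disjnt (wreath_orbits H l r S g)"
  using wreath_orbit_eq(2) unfolding pairwise_def disjnt_def by blast

lemma finite_wreath_orbits: "finite (wreath_orbits H l r S g)"
  unfolding wreath_orbits_def using finite_basis by (rule finite_imageI)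

lemma finite_wreath_orbit: "Q \<in> wreath_orbits H l r S g \<Longrightarrow> finite Q"
  using wreath_orbit_eq(1) finite_basis by (meson finite_subset subsetI)

lemma cycle_type_wreath_orbit:
  assumes "Q \<in> wreath_orbits H l r S g" "t \<in> Q" "u \<in> Q"
  shows "cycle_type g t = (card Q, conj_class H (cycle_prod H l r S g u (card Q)))"
proof -
  have t: "t \<in> S" "perm_orbit (\<pi> g) t = Q"
    using wreath_orbit_eq[OF assms(1,2)] by simp_all
  then obtain i where "u = (\<pi> g ^^ i) t"
    using assms(3) unfolding perm_orbit_def by blast
  moreover have "(\<pi> g ^^ card Q) t = t"
    using funpow_card_perm_orbit[OF wperm_self_map t(1)] t(2) by simp
  ultimately have "conj_class H (cycle_prod H l r S g u (card Q))
      = conj_class H (cycle_prod H l r S g t (card Q))"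
    using conj_class_cycle_prod_funpow[OF g t(1)] by simp
  then show ?thesis
    using cycle_type_basis[OF t(1)] t(2) by simp
qed

lemma mset_cycle_type_basis:
  assumes rep: "\<forall>Q\<in>wreath_orbits H l r S g. rep Q \<in> Q"
  shows "image_mset (cycle_type g) (mset_set S) = repeat_fst (lift H l r S g rep)"
proof -
  let ?P = "wreath_orbits H l r S g"
  let ?F = "\<lambda>Q. (card Q, conj_class H (cycle_prod H l r S g (rep Q) (card Q)))"
  have "cycle_type g t = ?F Q" if "Q \<in> ?P" "t \<in> Q" for Q t
    using cycle_type_wreath_orbit that rep by blast
  then have "image_mset (cycle_type g) (mset_set (\<Union>?P)) = (\<Sum>Q\<in>?P. replicate_mset (card Q) (?F Q))"
    using finite_wreath_orbits finite_wreath_orbit disjoint_wreath_orbits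
    by (intro image_mset_mset_set_partition) auto
  then show ?thesis
    unfolding Union_wreath_orbits lift_def repeat_fst_def sum_unfold_sum_mset
    by (simp add: multiset.map_comp comp_def)
qed

lemma lift_degree_pos:
  assumes rep: "\<forall>Q\<in>wreath_orbits H l r S g. rep Q \<in> Q"
  shows "\<forall>v\<in>#lift H l r S g rep. 0 < fst v"
  unfolding lift_def using finite_wreath_orbits finite_wreath_orbit rep
  by (auto simp: card_gt_0_iff)

end

lemma mset_cycle_type_conj:
  assumes "x \<in> carrier G" "g \<in> carrier G"
  shows "image_mset (cycle_type (x \<otimes>\<^bsub>G\<^esub> g \<otimes>\<^bsub>G\<^esub> inv\<^bsub>G\<^esub> x)) (mset_set ((\<lambda>s. r s (inv\<^bsub>G\<^esub> x)) ` S))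
    = image_mset (cycle_type g) (mset_set S)"
proof -
  let ?g' = "x \<otimes>\<^bsub>G\<^esub> g \<otimes>\<^bsub>G\<^esub> inv\<^bsub>G\<^esub> x" and ?\<phi> = "\<lambda>s. r s (inv\<^bsub>G\<^esub> x)"
  have "inj_on ?\<phi> S"
    using inj_on_r[of "inv\<^bsub>G\<^esub> x"] assms(1) basis_subset by (simp add: inj_on_subset)
  then have "image_mset (cycle_type ?g') (mset_set (?\<phi> ` S)) = image_mset (\<lambda>s. cycle_type ?g' (?\<phi> s)) (mset_set S)"
    by (simp add: image_mset_mset_set[symmetric] multiset.map_comp comp_def)
  also have "\<dots> = image_mset (cycle_type g) (mset_set S)"
  proof (rule image_mset_cong)
    fix s assume "s \<in># mset_set S"
    then have s: "s \<in> S"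
      using finite_basis by simp
    show "cycle_type ?g' (?\<phi> s) = cycle_type g s"
      using s basis_subset cycle_prod_closed[OF assms(2) s] r_cycle_degree_basis[OF assms(2) s]
      by (intro cycle_type_conj[OF assms]) auto
  qed
  finally show ?thesis .
qed

end

theorem mainTheorem11:
  fixes H :: "('h, 'a) monoid_scheme" and G :: "('g, 'c) monoid_scheme"
    and X :: "'b set" and l :: "'h \<Rightarrow> 'b \<Rightarrow> 'b" and r :: "'b \<Rightarrow> 'g \<Rightarrow> 'b"
  assumes "biset H G X l r"
    and "left_free H X l"
    and "is_basis H X l S1" and "finite S1"
    and "is_basis H X l S2"
    and "g1 \<in> carrier G" and "g2 \<in> conj_class G g1"
    and "\<forall>Q\<in>wreath_orbits H l r S1 g1. rep1 Q \<in> Q"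
    and "\<forall>Q\<in>wreath_orbits H l r S2 g2. rep2 Q \<in> Q"
  shows "lift H l r S1 g1 rep1 = lift H l r S2 g2 rep2"
proof -
  interpret B1: finite_biset_basis H G X l r S1
    using assms(1-4) by unfold_locales
  obtain x where x: "x \<in> carrier G" and g2: "g2 = x \<otimes>\<^bsub>G\<^esub> g1 \<otimes>\<^bsub>G\<^esub> inv\<^bsub>G\<^esub> x"
    using assms(7) unfolding conj_class_def by blast
  have g2_closed: "g2 \<in> carrier G"
    using x assms(6) g2 by simp
  let ?S1' = "(\<lambda>s. r s (inv\<^bsub>G\<^esub> x)) ` S1"
  interpret B1': finite_biset_basis H G X l r ?S1'
    using B1.is_basis_r[of "inv\<^bsub>G\<^esub> x"] x B1.finite_basis by unfold_locales auto
  have S2: "finite S2"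
    "image_mset (B1.cycle_type g2) (mset_set S2) = image_mset (B1.cycle_type g2) (mset_set ?S1')"
    using B1'.basis_change[OF assms(5) B1'.finite_basis B1'.cycle_type_l_eq[OF g2_closed]] by simp_all
  interpret B2: finite_biset_basis H G X l r S2
    using assms(5) S2(1) by unfold_locales
  have "repeat_fst (lift H l r S1 g1 rep1) = repeat_fst (lift H l r S2 g2 rep2)"
    using B1.mset_cycle_type_basis[OF assms(6,8)] B2.mset_cycle_type_basis[OF g2_closed assms(9)]
      B1.mset_cycle_type_conj[OF x assms(6)] S2(2) g2 by simp
  then show ?thesis
    using repeat_fst_inj B1.lift_degree_pos[OF assms(6,8)] B2.lift_degree_pos[OF g2_closed assms(9)]
    by blast
qed

end
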